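(* Let $\psi, f: S^2\times H\to\mathbb{R}$ be functions for which the integrals below exist, and define the spherical voxel convolution at $p\in S^2\times H$ by $$[\psi\star f](p) = \int_0^{2\pi}\int_{SO(3)}\psi_\mathcal{T}(R^{-1}\mathcal{T}(p))\,f_\mathcal{T}(RZ(\gamma))\,dR\,d\gamma .$$ Suppose that $\psi_\mathcal{T}(R)=\psi_\mathcal{T}(RZ(\theta))$ for all $R\in SO(3)$ and all angles $\theta$. Then for every $Q\in SO(3)$ and every $p\in S^2\times H$, $$[\psi\star L_Qf](Qp) = [\psi\star f](p).$$
   Context: $Z(\theta)$, $Y(\theta)$ are the rotation matrices about the $z$- and $y$-axes by angle $\theta$; $n=(0,0,1)^T$; points of $S^2$ are $s(\alpha,\beta)=Z(\alpha)Y(\beta)n$ with $\alpha\in[0,2\pi]$, $\beta\in[0,\pi]$; $H=[0,1]$; $Q\in SO(3)$ acts on $S^2\times H$ by $Q(s,h)=(Qs,h)$. The map $\mathcal{T}: S^2\times H\to SO(3)$ is $\mathcal{T}(s(\alpha,\beta),h)=Z(\alpha)Y(\beta)Z(2\pi h)$, which is a bijection almost everywhere. For a function $g$ on $S^2\times H$, its adjoint function on $SO(3)$ is $g_\mathcal{T}(R)=g(\mathcal{T}^{-1}(R))$ (defined almost everywhere). The rotation operator is $[L_Qf](x)=f(Q^{-1}x)$. $dR$ is Haar measure on $SO(3)$ and $d\gamma$ is Lebesgue measure on $[0,2\pi]$. *)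

theory Defs
  imports "HOL-Probability.Probability"
begin

text \<open>Rotation matrices; a matrix \<open>real^3^3\<close> is a vector of rows.\<close>

definition SO3 :: "(real^3^3) set" where
  "SO3 = {R. orthogonal_matrix R \<and> det R = 1}"

definition Zrot :: "real \<Rightarrow> real^3^3" where
  "Zrot t = vector [vector [cos t, - sin t, 0], vector [sin t, cos t, 0], vector [0, 0, 1]]"

definition Yrot :: "real \<Rightarrow> real^3^3" where
  "Yrot t = vector [vector [cos t, 0, sin t], vector [0, 1, 0], vector [- sin t, 0, cos t]]"

definition nvec :: "real^3" where
  "nvec = vector [0, 0, 1]"

definition sph :: "real \<Rightarrow> real \<Rightarrow> real^3" where
  "sph \<alpha> \<beta> = (Zrot \<alpha> ** Yrot \<beta>) *v nvec"

definition S2 :: "(real^3) set" where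
  "S2 = {sph \<alpha> \<beta> | \<alpha> \<beta>. \<alpha> \<in> {0..2*pi} \<and> \<beta> \<in> {0..pi}}"

definition Hset :: "real set" where
  "Hset = {0..1}"

text \<open>Chosen spherical coordinates of a point of the sphere (unique except on a null set).\<close>
definition sph_coords :: "real^3 \<Rightarrow> real \<times> real" where
  "sph_coords s = (SOME (\<alpha>, \<beta>). \<alpha> \<in> {0..2*pi} \<and> \<beta> \<in> {0..pi} \<and> sph \<alpha> \<beta> = s)"

definition Tmap :: "(real^3) \<times> real \<Rightarrow> real^3^3" where
  "Tmap p = (case sph_coords (fst p) of (\<alpha>, \<beta>) \<Rightarrow> Zrot \<alpha> ** Yrot \<beta> ** Zrot (2 * pi * snd p))"

text \<open>Adjoint function g_T(R) = g(T^{-1}(R)).\<close>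
definition adj :: "((real^3) \<times> real \<Rightarrow> real) \<Rightarrow> real^3^3 \<Rightarrow> real" where
  "adj g R = g (inv_into (S2 \<times> Hset) Tmap R)"

definition rot_act :: "real^3^3 \<Rightarrow> (real^3) \<times> real \<Rightarrow> (real^3) \<times> real" where
  "rot_act Q p = (Q *v fst p, snd p)"

definition Lrot :: "real^3^3 \<Rightarrow> ((real^3) \<times> real \<Rightarrow> real) \<Rightarrow> (real^3) \<times> real \<Rightarrow> real" where
  "Lrot Q f x = f (rot_act (matrix_inv Q) x)"

definition haar_SO3 :: "(real^3^3) measure \<Rightarrow> bool" where
  "haar_SO3 \<mu> \<longleftrightarrow> prob_space \<mu> \<and> sets \<mu> = sets (restrict_space borel SO3) \<and>
     (\<forall>Q\<in>SO3. distr \<mu> \<mu> (\<lambda>R. Q ** R) = \<mu>)"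

definition conv_integrand ::
  "((real^3) \<times> real \<Rightarrow> real) \<Rightarrow> ((real^3) \<times> real \<Rightarrow> real) \<Rightarrow> (real^3) \<times> real \<Rightarrow> (real^3^3) \<times> real \<Rightarrow> real" where
  "conv_integrand \<psi> f p = (\<lambda>(R, \<gamma>). adj \<psi> (matrix_inv R ** Tmap p) * adj f (R ** Zrot \<gamma>))"

definition voxconv ::
  "(real^3^3) measure \<Rightarrow> ((real^3) \<times> real \<Rightarrow> real) \<Rightarrow> ((real^3) \<times> real \<Rightarrow> real) \<Rightarrow> (real^3) \<times> real \<Rightarrow> real" where
  "voxconv \<mu> \<psi> f p =
     (LINT \<gamma>:{0..2*pi}|lborel. (\<integral>R. conv_integrand \<psi> f p (R, \<gamma>) \<partial>\<mu>))"

end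

theory Submission
  imports Defs
begin

(* The matrices
   T(Qs, h) and Q T(s, h) both map n to Qs, so they differ by a right factor Z(phi) with phi
   independent of h.  Substituting R := Q R (left invariance of the Haar measure), the psi-factor
   is therefore unchanged by the right Z-invariance of psi_T, while the f-factor becomes
   f_T(R Z(gamma + phi)) for all gamma outside a null set (where h is 0 or 1 and T is not
   injective).  Finally, a shift of gamma by phi preserves the integral over a full period. *)

lemma Zrot_add: "Zrot a ** Zrot b = Zrot (a + b)"
  by (simp add: Zrot_def matrix_matrix_mult_def vec_eq_iff forall_3 sum_3 cos_add sin_add algebra_simps)

lemma mult_Zrot_Zrot: "A ** Zrot a ** Zrot b = A ** Zrot (a + b)"
  by (simp add: matrix_mul_assoc[symmetric] Zrot_add)

lemma Zrot_0: "Zrot 0 = mat 1"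
  by (simp add: Zrot_def mat_def vec_eq_iff forall_3)

lemma Zrot_periodic: "Zrot (t + 2 * pi) = Zrot t"
  by (simp add: Zrot_def)

lemma Zrot_nvec: "Zrot t *v nvec = nvec"
  by (simp add: Zrot_def nvec_def matrix_vector_mult_def vec_eq_iff forall_3 sum_3)

lemma Zrot_eq_imp_int_multiple:
  assumes "Zrot a = Zrot b"
  obtains k :: int where "a - b = 2 * pi * k"
proof -
  have "Zrot a $ 1 $ 1 = Zrot b $ 1 $ 1" "Zrot a $ 2 $ 1 = Zrot b $ 2 $ 1"
    using assms by simp_all
  then have "cos a = cos b" "sin a = sin b"
    by (simp_all add: Zrot_def)
  then have "cos (a - b) = 1"
    by (simp add: cos_diff sin_cos_squared_add3)
  then show ?thesis
    using that by (auto simp: cos_one_2pi_int mult.commute mult.left_commute)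
qed

lemma Zrot_SO3: "Zrot t \<in> SO3"
  by (simp add: SO3_def orthogonal_matrix Zrot_def matrix_matrix_mult_def transpose_def mat_def
      vec_eq_iff forall_3 sum_3 det_3 algebra_simps)

lemma Yrot_SO3: "Yrot t \<in> SO3"
  by (simp add: SO3_def orthogonal_matrix Yrot_def matrix_matrix_mult_def transpose_def mat_def
      vec_eq_iff forall_3 sum_3 det_3 algebra_simps)

lemma SO3_mult: "A \<in> SO3 \<Longrightarrow> B \<in> SO3 \<Longrightarrow> A ** B \<in> SO3"
  by (simp add: SO3_def orthogonal_matrix_mul det_mul)

lemma SO3_transpose: "A \<in> SO3 \<Longrightarrow> transpose A \<in> SO3"
  by (simp add: SO3_def det_transpose)

lemma SO3_transpose_mult: "A \<in> SO3 \<Longrightarrow> transpose A ** A = mat 1"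
  by (simp add: SO3_def orthogonal_matrix_def)

lemma SO3_mult_transpose: "A \<in> SO3 \<Longrightarrow> A ** transpose A = mat 1"
  by (simp add: SO3_def orthogonal_matrix_def)

lemma SO3_transpose_mult_cancel: "A \<in> SO3 \<Longrightarrow> transpose A ** (A ** B) = B"
  by (simp add: matrix_mul_assoc SO3_transpose_mult matrix_mul_lid)

lemma SO3_matrix_inv:
  assumes A: "A \<in> SO3"
  shows "matrix_inv A = transpose A"
proof -
  have "\<exists>A'. A ** A' = mat 1 \<and> A' ** A = mat 1"
    using SO3_transpose_mult[OF A] SO3_mult_transpose[OF A] by blast
  then have "matrix_inv A ** A = mat 1"
    unfolding matrix_inv_def by (rule someI2_ex) blast
  then have "matrix_inv A ** (A ** transpose A) = transpose A"
    by (simp add: matrix_mul_assoc matrix_mul_lid)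
  then show ?thesis
    by (simp add: SO3_mult_transpose[OF A] matrix_mul_rid)
qed

lemma SO3_fixing_nvec_eq_Zrot:
  assumes C: "C \<in> SO3" and fixes_nvec: "C *v nvec = nvec"
  obtains \<phi> where "0 \<le> \<phi>" "\<phi> < 2 * pi" "C = Zrot \<phi>"
proof -
  have c3: "C$1$3 = 0" "C$2$3 = 0" "C$3$3 = 1"
    using fixes_nvec by (simp_all add: matrix_vector_mult_def nvec_def vec_eq_iff forall_3 sum_3)
  have tr: "C ** transpose C = mat 1" and tl: "transpose C ** C = mat 1" and det: "det C = 1"
    using C by (auto simp: SO3_mult_transpose SO3_transpose_mult SO3_def)
  have "(C ** transpose C)$3$3 = 1"
    using tr by (simp add: mat_def)
  then have "(C$3$1)^2 + (C$3$2)^2 = 0"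
    using c3 by (simp add: matrix_matrix_mult_def transpose_def sum_3 power2_eq_square)
  then have c31: "C$3$1 = 0" "C$3$2 = 0"
    by (simp_all add: sum_power2_eq_zero_iff)
  have "(transpose C ** C)$1$1 = 1" "(transpose C ** C)$2$2 = 1"
    using tl by (simp_all add: mat_def)
  then have col: "(C$1$1)^2 + (C$2$1)^2 = 1" "(C$1$2)^2 + (C$2$2)^2 = 1"
    using c31 by (simp_all add: matrix_matrix_mult_def transpose_def sum_3 power2_eq_square)
  have minor: "C$1$1 * C$2$2 - C$1$2 * C$2$1 = 1"
    using det c3 c31 by (simp add: det_3)
  have "(C$1$2 + C$2$1)^2 + (C$2$2 - C$1$1)^2
      = ((C$1$1)^2 + (C$2$1)^2) + ((C$1$2)^2 + (C$2$2)^2) - 2 * (C$1$1 * C$2$2 - C$1$2 * C$2$1)"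
    by (simp add: power2_eq_square algebra_simps)
  also have "\<dots> = 0"
    using col minor by simp
  finally have "C$1$2 = - C$2$1" "C$2$2 = C$1$1"
    by (simp_all add: sum_power2_eq_zero_iff)
  moreover obtain t where "0 \<le> t" "t < 2 * pi" "C$1$1 = cos t" "C$2$1 = sin t"
    using col(1) by (rule sincos_total_2pi)
  ultimately show ?thesis
    using c3 c31 that by (simp add: Zrot_def vec_eq_iff forall_3)
qed

lemma SO3_same_nvec_image:
  assumes A: "A \<in> SO3" and B: "B \<in> SO3" and eq: "A *v nvec = B *v nvec"
  obtains \<phi> where "0 \<le> \<phi>" "\<phi> < 2 * pi" "B = A ** Zrot \<phi>"
proof -
  have C: "transpose A ** B \<in> SO3"
    by (simp add: A B SO3_mult SO3_transpose)
  have "(transpose A ** B) *v nvec = (transpose A ** A) *v nvec"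
    by (simp add: eq matrix_vector_mul_assoc[symmetric])
  then have "(transpose A ** B) *v nvec = nvec"
    by (simp add: SO3_transpose_mult[OF A])
  then obtain \<phi> where "0 \<le> \<phi>" "\<phi> < 2 * pi" "transpose A ** B = Zrot \<phi>"
    using SO3_fixing_nvec_eq_Zrot[OF C] by blast
  moreover have "A ** (transpose A ** B) = B"
    by (metis matrix_mul_assoc SO3_mult_transpose[OF A] matrix_mul_lid)
  ultimately show ?thesis
    using that by metis
qed

lemma sph_eq_vector: "sph a b = vector [cos a * sin b, sin a * sin b, cos b]"
  by (simp add: sph_def Zrot_def Yrot_def nvec_def matrix_matrix_mult_def matrix_vector_mult_def
      vec_eq_iff forall_3 sum_3)

lemma norm_eq_1_vec3: "norm (x :: real^3) = 1 \<longleftrightarrow> (x$1)^2 + (x$2)^2 + (x$3)^2 = 1"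
  by (simp add: norm_eq_1 inner_vec_def sum_3 power2_eq_square)

lemma S2_iff_norm: "s \<in> S2 \<longleftrightarrow> norm s = 1"
proof
  assume "s \<in> S2"
  then obtain a b where "s = sph a b"
    unfolding S2_def by blast
  moreover have "(cos a * sin b)^2 + (sin a * sin b)^2 + (cos b)^2 = 1"
    by (simp add: power_mult_distrib distrib_right[symmetric])
  ultimately show "norm s = 1"
    by (simp add: norm_eq_1_vec3 sph_eq_vector)
next
  assume "norm s = 1"
  then have sq: "(s$1)^2 + (s$2)^2 + (s$3)^2 = 1"
    by (simp add: norm_eq_1_vec3)
  then have s3: "\<bar>s$3\<bar> \<le> 1"
    by (metis abs_le_square_iff abs_one add_increasing le_add_same_cancel2 one_power2 zero_le_power2 add.commute)
  define b where "b = arccos (s$3)"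
  define r where "r = sqrt (1 - (s$3)^2)"
  have b: "0 \<le> b" "b \<le> pi" "cos b = s$3" "sin b = r"
    using s3 by (auto simp: b_def r_def arccos_lbound arccos_ubound cos_arccos_abs sin_arccos_abs)
  have r2: "r^2 = (s$1)^2 + (s$2)^2" and r0: "r \<ge> 0"
    using sq s3 by (simp_all add: r_def abs_square_le_1)
  show "s \<in> S2"
  proof (cases "r = 0")
    case True
    then have "s$1 = 0" "s$2 = 0"
      using r2 by (auto simp: sum_power2_eq_zero_iff)
    then have "sph 0 b = s"
      using True b by (simp add: sph_eq_vector vec_eq_iff forall_3)
    then show ?thesis
      unfolding S2_def using b by force
  next
    case False
    then have "r > 0"
      using r0 by simp
    then have "(s$1 / r)^2 + (s$2 / r)^2 = 1"
      by (simp add: power_divide add_divide_distrib[symmetric] r2[symmetric])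
    then obtain a where a: "0 \<le> a" "a < 2 * pi" "s$1 / r = cos a" "s$2 / r = sin a"
      by (rule sincos_total_2pi)
    then have "sph a b = s"
      using b \<open>r > 0\<close> by (auto simp: sph_eq_vector vec_eq_iff forall_3 field_simps)
    then show ?thesis
      unfolding S2_def using a b by force
  qed
qed

lemma nvec_in_S2: "nvec \<in> S2"
  by (simp add: S2_iff_norm norm_eq_1_vec3 nvec_def)

lemma SO3_mult_in_S2_iff: "M \<in> SO3 \<Longrightarrow> M *v s \<in> S2 \<longleftrightarrow> s \<in> S2"
  by (simp add: S2_iff_norm SO3_def orthogonal_transformation_matrix matrix_of_matrix_vector_mul
      orthogonal_transformation_norm)

lemma sph_coords_sph:
  assumes "s \<in> S2"
  shows "sph (fst (sph_coords s)) (snd (sph_coords s)) = s"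
proof -
  have "\<exists>x. case x of (a, b) \<Rightarrow> a \<in> {0..2*pi} \<and> b \<in> {0..pi} \<and> sph a b = s"
    using assms unfolding S2_def by auto
  then have "case sph_coords s of (a, b) \<Rightarrow> a \<in> {0..2*pi} \<and> b \<in> {0..pi} \<and> sph a b = s"
    unfolding sph_coords_def by (rule someI_ex)
  then show ?thesis
    by (simp split: prod.splits)
qed

lemma Tmap_split: "Tmap (s, h) = Tmap (s, 0) ** Zrot (2 * pi * h)"
  by (simp add: Tmap_def Zrot_0 matrix_mul_rid split: prod.splits)

lemma Tmap_SO3: "Tmap p \<in> SO3"
  by (simp add: Tmap_def SO3_mult Zrot_SO3 Yrot_SO3 split: prod.splits)

lemma Tmap_nvec:
  assumes "s \<in> S2"
  shows "Tmap (s, h) *v nvec = s"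
proof -
  have "Tmap (s, h) *v nvec = Tmap (s, 0) *v (Zrot (2 * pi * h) *v nvec)"
    by (subst Tmap_split) (simp add: matrix_vector_mul_assoc)
  also have "\<dots> = s"
    using sph_coords_sph[OF assms]
    by (simp add: Zrot_nvec Tmap_def Zrot_0 matrix_mul_rid sph_def case_prod_unfold)
  finally show ?thesis .
qed

lemma Tmap_fibre_surj:
  assumes M: "M \<in> SO3"
  obtains h where "0 \<le> h" "h < 1" "Tmap (M *v nvec, h) = M"
proof -
  have s: "M *v nvec \<in> S2"
    using SO3_mult_in_S2_iff[OF M] nvec_in_S2 by simp
  obtain \<phi> where \<phi>: "0 \<le> \<phi>" "\<phi> < 2 * pi" "M = Tmap (M *v nvec, 0) ** Zrot \<phi>"
    using SO3_same_nvec_image[OF Tmap_SO3 M] Tmap_nvec[OF s] by metis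
  have "Tmap (M *v nvec, \<phi> / (2 * pi)) = M"
    using \<phi>(3) by (simp add: Tmap_split[of _ "\<phi> / (2 * pi)"])
  moreover have "0 \<le> \<phi> / (2 * pi)" "\<phi> / (2 * pi) < 1"
    using \<phi> by auto
  ultimately show ?thesis
    using that by blast
qed

lemma Tmap_inj:
  assumes s: "s \<in> S2" "s' \<in> S2" and h: "0 < h" "h < 1" "h' \<in> Hset"
    and eq: "Tmap (s', h') = Tmap (s, h)"
  shows "(s', h') = (s, h)"
proof -
  have "s' = s"
    using Tmap_nvec[OF s(1), of h] Tmap_nvec[OF s(2), of h'] eq by simp
  then have "Tmap (s, 0) ** Zrot (2 * pi * h') = Tmap (s, 0) ** Zrot (2 * pi * h)"
    using eq by (simp add: Tmap_split[of s h] Tmap_split[of s h'])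
  then have "Zrot (2 * pi * h') = Zrot (2 * pi * h)"
    by (metis SO3_transpose_mult_cancel[OF Tmap_SO3])
  then obtain k :: int where "2 * pi * h' - 2 * pi * h = 2 * pi * k"
    by (rule Zrot_eq_imp_int_multiple)
  then have "h' - h = k"
    by (simp add: right_diff_distrib[symmetric])
  moreover have "-1 < h' - h" "h' - h < 1"
    using h by (auto simp: Hset_def)
  ultimately have "k = 0"
    by simp
  with \<open>h' - h = k\<close> have "h' = h"
    by simp
  with \<open>s' = s\<close> show ?thesis
    by simp
qed

lemma adj_Tmap:
  assumes "s \<in> S2" "0 < h" "h < 1"
  shows "adj g (Tmap (s, h)) = g (s, h)"
proof -
  have "(s, h) \<in> S2 \<times> Hset"
    using assms by (simp add: Hset_def)
  then have "inv_into (S2 \<times> Hset) Tmap (Tmap (s, h)) \<in> S2 \<times> Hset"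
    and "Tmap (inv_into (S2 \<times> Hset) Tmap (Tmap (s, h))) = Tmap (s, h)"
    by (auto intro: inv_into_into f_inv_into_f)
  then have "inv_into (S2 \<times> Hset) Tmap (Tmap (s, h)) = (s, h)"
    using Tmap_inj[OF assms(1) _ assms(2,3)] by (metis mem_Times_iff prod.collapse)
  then show ?thesis
    by (simp add: adj_def)
qed

lemma Tmap_equivariant_up_to_Zrot:
  assumes Q: "Q \<in> SO3" and s: "s \<in> S2"
  obtains \<phi> where "0 \<le> \<phi>" "\<phi> < 2 * pi" "\<And>h. Tmap (Q *v s, h) = Q ** Tmap (s, h) ** Zrot \<phi>"
proof -
  have "(Q ** Tmap (s, 0)) *v nvec = Tmap (Q *v s, 0) *v nvec"
    using s SO3_mult_in_S2_iff[OF Q]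
    by (simp add: matrix_vector_mul_assoc[symmetric] Tmap_nvec)
  then obtain \<phi> where \<phi>: "0 \<le> \<phi>" "\<phi> < 2 * pi"
    and base: "Tmap (Q *v s, 0) = Q ** Tmap (s, 0) ** Zrot \<phi>"
    using SO3_same_nvec_image[OF SO3_mult[OF Q Tmap_SO3] Tmap_SO3] by metis
  have "Tmap (Q *v s, h) = Q ** Tmap (s, h) ** Zrot \<phi>" for h
  proof -
    have "Tmap (Q *v s, h) = Q ** Tmap (s, 0) ** (Zrot \<phi> ** Zrot (2 * pi * h))"
      by (subst Tmap_split) (simp add: base matrix_mul_assoc)
    also have "\<dots> = Q ** (Tmap (s, 0) ** Zrot (2 * pi * h)) ** Zrot \<phi>"
      by (simp add: Zrot_add mult_Zrot_Zrot add.commute matrix_mul_assoc)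
    finally show ?thesis
      by (simp only: Tmap_split[of s h, symmetric])
  qed
  with \<phi> that show ?thesis
    by blast
qed

lemma adj_matrix_inv_mult_Tmap_rot_act:
  assumes inv: "\<forall>R\<in>SO3. \<forall>\<theta>. adj \<psi> R = adj \<psi> (R ** Zrot \<theta>)"
    and Q: "Q \<in> SO3" and R: "R \<in> SO3" and p: "p \<in> S2 \<times> Hset"
  shows "adj \<psi> (matrix_inv (Q ** R) ** Tmap (rot_act Q p)) = adj \<psi> (matrix_inv R ** Tmap p)"
proof -
  obtain s h where ps: "p = (s, h)" and s: "s \<in> S2"
    using p by auto
  obtain \<phi> where T: "Tmap (Q *v s, h) = Q ** Tmap (s, h) ** Zrot \<phi>"
    using Tmap_equivariant_up_to_Zrot[OF Q s] by metis
  have "matrix_inv (Q ** R) ** Tmap (rot_act Q p) = transpose R ** (transpose Q ** (Q ** Tmap p)) ** Zrot \<phi>"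
    by (simp add: ps rot_act_def T SO3_matrix_inv[OF SO3_mult[OF Q R]] matrix_transpose_mul
        matrix_mul_assoc)
  also have "\<dots> = (matrix_inv R ** Tmap p) ** Zrot \<phi>"
    by (simp add: SO3_transpose_mult_cancel[OF Q] SO3_matrix_inv[OF R])
  finally show ?thesis
    using inv R by (simp add: SO3_matrix_inv SO3_mult SO3_transpose Tmap_SO3)
qed

(* Tmap (s, 0) = Tmap (s, 1) is the one point of the fibre over s where Tmap is not injective. *)
lemma adj_Lrot:
  assumes Q: "Q \<in> SO3" and s: "s \<in> S2"
  obtains \<phi> where "0 \<le> \<phi>" "\<phi> < 2 * pi"
    "\<And>M. M \<in> SO3 \<Longrightarrow> M *v nvec = s \<Longrightarrow> M \<noteq> Tmap (s, 0) \<Longrightarrow>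
       adj (Lrot Q f) M = adj f (transpose Q ** M ** Zrot \<phi>)"
proof -
  have Qs: "transpose Q *v s \<in> S2"
    using SO3_mult_in_S2_iff[OF SO3_transpose[OF Q]] s by simp
  obtain \<phi> where \<phi>: "0 \<le> \<phi>" "\<phi> < 2 * pi"
    and T: "\<And>h. Tmap (transpose Q *v s, h) = transpose Q ** Tmap (s, h) ** Zrot \<phi>"
    using Tmap_equivariant_up_to_Zrot[OF SO3_transpose[OF Q] s] by metis
  have "adj (Lrot Q f) M = adj f (transpose Q ** M ** Zrot \<phi>)"
    if M: "M \<in> SO3" "M *v nvec = s" "M \<noteq> Tmap (s, 0)" for M
  proof -
    obtain h where "0 \<le> h" "h < 1" and Mh: "Tmap (s, h) = M"
      using Tmap_fibre_surj[OF M(1)] M(2) by metis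
    moreover have "h \<noteq> 0"
      using Mh M(3) by auto
    ultimately have h: "0 < h" "h < 1"
      by auto
    have "adj (Lrot Q f) M = f (transpose Q *v s, h)"
      by (simp add: Mh[symmetric] adj_Tmap[OF s h] Lrot_def rot_act_def SO3_matrix_inv[OF Q])
    also have "\<dots> = adj f (Tmap (transpose Q *v s, h))"
      by (rule adj_Tmap[OF Qs h, symmetric])
    finally show ?thesis
      by (simp only: T Mh)
  qed
  with \<phi> that show ?thesis
    by blast
qed

lemma conv_integrand_rot_act:
  assumes inv: "\<forall>R\<in>SO3. \<forall>\<theta>. adj \<psi> R = adj \<psi> (R ** Zrot \<theta>)"
    and Q: "Q \<in> SO3" and R: "R \<in> SO3" and p: "p \<in> S2 \<times> Hset"
  obtains \<phi> C where "0 \<le> \<phi>" "\<phi> < 2 * pi"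
    "\<And>\<gamma>. Zrot \<gamma> \<noteq> C \<Longrightarrow>
       conv_integrand \<psi> (Lrot Q f) (rot_act Q p) (Q ** R, \<gamma>) = conv_integrand \<psi> f p (R, \<gamma> + \<phi>)"
proof -
  define s where "s = Q ** R *v nvec"
  have s: "s \<in> S2"
    using SO3_mult_in_S2_iff[OF SO3_mult[OF Q R]] nvec_in_S2 by (simp add: s_def)
  obtain \<phi> where \<phi>: "0 \<le> \<phi>" "\<phi> < 2 * pi"
    and f_eq: "\<And>M. M \<in> SO3 \<Longrightarrow> M *v nvec = s \<Longrightarrow> M \<noteq> Tmap (s, 0) \<Longrightarrow>
       adj (Lrot Q f) M = adj f (transpose Q ** M ** Zrot \<phi>)"
    using adj_Lrot[OF Q s] by metis
  define C where "C = transpose (Q ** R) ** Tmap (s, 0)"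
  have "adj (Lrot Q f) (Q ** R ** Zrot \<gamma>) = adj f (R ** Zrot (\<gamma> + \<phi>))" if "Zrot \<gamma> \<noteq> C" for \<gamma>
  proof -
    have "Q ** R ** Zrot \<gamma> \<noteq> Tmap (s, 0)"
      using that SO3_transpose_mult_cancel[OF SO3_mult[OF Q R]] by (metis C_def)
    moreover have "Q ** R ** Zrot \<gamma> *v nvec = s"
      by (simp add: s_def matrix_vector_mul_assoc[symmetric] Zrot_nvec)
    ultimately show ?thesis
      using f_eq Q R
      by (simp add: SO3_mult Zrot_SO3 matrix_mul_assoc mult_Zrot_Zrot SO3_transpose_mult matrix_mul_lid)
  qed
  then have "conv_integrand \<psi> (Lrot Q f) (rot_act Q p) (Q ** R, \<gamma>) = conv_integrand \<psi> f p (R, \<gamma> + \<phi>)"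
    if "Zrot \<gamma> \<noteq> C" for \<gamma>
    using that adj_matrix_inv_mult_Tmap_rot_act[OF inv Q R p] by (simp add: conv_integrand_def)
  with \<phi> show ?thesis
    by (rule that)
qed

lemma Zrot_eq_null_sets: "{\<gamma>. Zrot \<gamma> = C} \<in> null_sets lborel"
proof (cases "\<exists>\<gamma>\<^sub>0. Zrot \<gamma>\<^sub>0 = C")
  case True
  then obtain \<gamma>\<^sub>0 where \<gamma>\<^sub>0: "Zrot \<gamma>\<^sub>0 = C" ..
  have "{\<gamma>. Zrot \<gamma> = C} \<subseteq> range (\<lambda>k::int. \<gamma>\<^sub>0 + 2 * pi * k)"
  proof
    fix \<gamma> assume "\<gamma> \<in> {\<gamma>. Zrot \<gamma> = C}"
    then have "Zrot \<gamma> = Zrot \<gamma>\<^sub>0"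
      using \<gamma>\<^sub>0 by simp
    then obtain k :: int where "\<gamma> - \<gamma>\<^sub>0 = 2 * pi * k"
      by (rule Zrot_eq_imp_int_multiple)
    then show "\<gamma> \<in> range (\<lambda>k::int. \<gamma>\<^sub>0 + 2 * pi * k)"
      by (intro range_eqI[of _ _ k]) simp
  qed
  then show ?thesis
    by (rule countable_imp_null_set_lborel[OF countable_subset]) simp
qed simp

lemma set_integral_periodic_shift:
  fixes g :: "real \<Rightarrow> real"
  assumes periodic: "\<And>t. g (t + c) = g t" and \<phi>: "0 \<le> \<phi>" "\<phi> \<le> c"
    and g: "set_integrable lborel {0..c} g"
  shows "set_integrable lborel {0..c} (\<lambda>t. g (t + \<phi>))"
    and "(LINT t:{0..c}|lborel. g (t + \<phi>)) = (LINT t:{0..c}|lborel. g t)"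
proof -
  define G where "G = (\<lambda>u. indicator {0..c} u * g u)"
  define G\<^sub>1 where "G\<^sub>1 = (\<lambda>u. G u * indicator {\<phi>..c} u)"
  define G\<^sub>2 where "G\<^sub>2 = (\<lambda>u. G u * indicator {0<..\<phi>} u)"
  have G: "integrable lborel G"
    using g by (simp add: set_integrable_def G_def)
  have G\<^sub>1: "integrable lborel G\<^sub>1" and G\<^sub>2: "integrable lborel G\<^sub>2"
    unfolding G\<^sub>1_def G\<^sub>2_def by (auto intro: integrable_real_mult_indicator G)
  have G\<^sub>1_shift: "integrable lborel (\<lambda>t. G\<^sub>1 (\<phi> + 1 * t))"
    using lborel_integrable_real_affine_iff[of 1 G\<^sub>1 \<phi>] G\<^sub>1 by simp
  have G\<^sub>2_shift: "integrable lborel (\<lambda>t. G\<^sub>2 ((\<phi> - c) + 1 * t))"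
    using lborel_integrable_real_affine_iff[of 1 G\<^sub>2 "\<phi> - c"] G\<^sub>2 by simp
  \<comment> \<open>the shifted window \<open>[\<phi>, c + \<phi>]\<close> is \<open>[\<phi>, c]\<close> followed by a translate of \<open>(0, \<phi>]\<close>\<close>
  have split: "(\<lambda>t. indicator {0..c} t *\<^sub>R g (t + \<phi>)) = (\<lambda>t. G\<^sub>1 (\<phi> + 1 * t) + G\<^sub>2 ((\<phi> - c) + 1 * t))"
  proof
    fix t
    have "g (t + \<phi> - c) = g (t + \<phi>)"
      using periodic[of "t + \<phi> - c"] by simp
    then show "indicator {0..c} t *\<^sub>R g (t + \<phi>) = G\<^sub>1 (\<phi> + 1 * t) + G\<^sub>2 ((\<phi> - c) + 1 * t)"
      using \<phi> by (auto simp: G\<^sub>1_def G\<^sub>2_def G_def indicator_def algebra_simps)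
  qed
  show "set_integrable lborel {0..c} (\<lambda>t. g (t + \<phi>))"
    unfolding set_integrable_def split using G\<^sub>1_shift G\<^sub>2_shift by simp
  have "(LINT t:{0..c}|lborel. g (t + \<phi>)) = integral\<^sup>L lborel G\<^sub>1 + integral\<^sup>L lborel G\<^sub>2"
    unfolding set_lebesgue_integral_def split
    using G\<^sub>1_shift G\<^sub>2_shift lborel_integral_real_affine[of 1 G\<^sub>1 \<phi>]
      lborel_integral_real_affine[of 1 G\<^sub>2 "\<phi> - c"]
    by simp
  also have "\<dots> = integral\<^sup>L lborel (\<lambda>u. G\<^sub>1 u + G\<^sub>2 u)"
    using G\<^sub>1 G\<^sub>2 by simp
  also have "\<dots> = integral\<^sup>L lborel G"
  proof (rule integral_cong_AE)
    show "AE u in lborel. G\<^sub>1 u + G\<^sub>2 u = G u"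
      using AE_lborel_singleton[of 0] AE_lborel_singleton[of \<phi>]
      by eventually_elim (use \<phi> in \<open>auto simp: G\<^sub>1_def G\<^sub>2_def G_def indicator_def\<close>)
  qed (use G\<^sub>1 G\<^sub>2 G in auto)
  finally show "(LINT t:{0..c}|lborel. g (t + \<phi>)) = (LINT t:{0..c}|lborel. g t)"
    by (simp add: set_lebesgue_integral_def G_def)
qed

lemma set_integral_conv_integrand_rot_act:
  assumes inv: "\<forall>R\<in>SO3. \<forall>\<theta>. adj \<psi> R = adj \<psi> (R ** Zrot \<theta>)"
    and Q: "Q \<in> SO3" and R: "R \<in> SO3" and p: "p \<in> S2 \<times> Hset"
    and meas: "set_borel_measurable lborel {0..2*pi}
                 (\<lambda>\<gamma>. conv_integrand \<psi> (Lrot Q f) (rot_act Q p) (Q ** R, \<gamma>))"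
    and int: "set_integrable lborel {0..2*pi} (\<lambda>\<gamma>. conv_integrand \<psi> f p (R, \<gamma>))"
  shows "(LINT \<gamma>:{0..2*pi}|lborel. conv_integrand \<psi> (Lrot Q f) (rot_act Q p) (Q ** R, \<gamma>))
       = (LINT \<gamma>:{0..2*pi}|lborel. conv_integrand \<psi> f p (R, \<gamma>))"
proof -
  define g where "g = (\<lambda>\<gamma>. conv_integrand \<psi> f p (R, \<gamma>))"
  obtain \<phi> C where \<phi>: "0 \<le> \<phi>" "\<phi> < 2 * pi"
    and shift: "\<And>\<gamma>. Zrot \<gamma> \<noteq> C \<Longrightarrow>
       conv_integrand \<psi> (Lrot Q f) (rot_act Q p) (Q ** R, \<gamma>) = g (\<gamma> + \<phi>)"
    using conv_integrand_rot_act[OF inv Q R p] unfolding g_def by metis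
  have periodic: "g (t + 2 * pi) = g t" for t
    by (simp add: g_def conv_integrand_def mult_Zrot_Zrot[symmetric] Zrot_periodic)
  note g_shift = set_integral_periodic_shift[of g, OF periodic, of \<phi>]
  have "(LINT \<gamma>:{0..2*pi}|lborel. conv_integrand \<psi> (Lrot Q f) (rot_act Q p) (Q ** R, \<gamma>))
      = (LINT \<gamma>:{0..2*pi}|lborel. g (\<gamma> + \<phi>))"
    unfolding set_lebesgue_integral_def
  proof (rule integral_cong_AE)
    show "AE \<gamma> in lborel. indicator {0..2*pi} \<gamma> *\<^sub>R conv_integrand \<psi> (Lrot Q f) (rot_act Q p) (Q ** R, \<gamma>)
        = indicator {0..2*pi} \<gamma> *\<^sub>R g (\<gamma> + \<phi>)"
      using AE_not_in[OF Zrot_eq_null_sets[of C]] by eventually_elim (simp add: shift)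
  qed (use meas g_shift \<phi> int in \<open>auto simp: set_borel_measurable_def g_def set_integrable_def\<close>)
  also have "\<dots> = (LINT \<gamma>:{0..2*pi}|lborel. g \<gamma>)"
    using g_shift \<phi> int by (simp add: g_def)
  finally show ?thesis
    by (simp add: g_def)
qed

lemma (in pair_sigma_finite) set_integrable_space_Times:
  fixes F :: "'a \<times> 'b \<Rightarrow> real"
  assumes F: "set_integrable (M1 \<Otimes>\<^sub>M M2) (space M1 \<times> B) F"
  shows "(\<lambda>x. LINT y:B|M2. F (x, y)) \<in> borel_measurable M1"
    and "x \<in> space M1 \<Longrightarrow> set_borel_measurable M2 B (\<lambda>y. F (x, y))"
    and "AE x in M1. set_integrable M2 B (\<lambda>y. F (x, y))"
    and "(LINT y:B|M2. (\<integral>x. F (x, y) \<partial>M1)) = (\<integral>x. (LINT y:B|M2. F (x, y)) \<partial>M1)"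
proof -
  define G where "G = (\<lambda>z. indicator (space M1 \<times> B) z *\<^sub>R F z)"
  have G: "integrable (M1 \<Otimes>\<^sub>M M2) G"
    using F by (simp add: set_integrable_def G_def)
  have G_section: "G (x, y) = indicator B y *\<^sub>R F (x, y)" if "x \<in> space M1" for x y
    using that by (simp add: G_def indicator_def)
  have G_meas: "G \<in> borel_measurable (M1 \<Otimes>\<^sub>M M2)"
    using G by (rule borel_measurable_integrable)
  have "(\<lambda>x. \<integral>y. G (x, y) \<partial>M2) \<in> borel_measurable M1"
    using M2.borel_measurable_lebesgue_integral[of "\<lambda>x y. G (x, y)"] G_meas by simp
  then show "(\<lambda>x. LINT y:B|M2. F (x, y)) \<in> borel_measurable M1"
    by (rule measurable_cong[THEN iffD1, rotated])
      (simp add: set_lebesgue_integral_def G_section)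
  show "set_borel_measurable M2 B (\<lambda>y. F (x, y))" if "x \<in> space M1"
  proof -
    have "(\<lambda>y. G (x, y)) \<in> borel_measurable M2"
      using G_meas that by (rule measurable_Pair2)
    then show ?thesis
      by (simp add: set_borel_measurable_def G_section[OF that])
  qed
  show "AE x in M1. set_integrable M2 B (\<lambda>y. F (x, y))"
    using AE_integrable_fst'[OF G] AE_space
    by eventually_elim (simp add: set_integrable_def G_section)
  have "(\<integral>x. G (x, y) \<partial>M1) = indicator B y * (\<integral>x. F (x, y) \<partial>M1)" for y
    by (simp add: G_section cong: Bochner_Integration.integral_cong)
  then have "(LINT y:B|M2. (\<integral>x. F (x, y) \<partial>M1)) = (\<integral>y. (\<integral>x. G (x, y) \<partial>M1) \<partial>M2)"
    by (simp add: set_lebesgue_integral_def)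
  also have "\<dots> = (\<integral>x. (\<integral>y. G (x, y) \<partial>M2) \<partial>M1)"
    using Fubini_integral[of "\<lambda>x y. G (x, y)"] G by simp
  also have "\<dots> = (\<integral>x. (LINT y:B|M2. F (x, y)) \<partial>M1)"
    by (intro Bochner_Integration.integral_cong refl) (simp add: set_lebesgue_integral_def G_section)
  finally show "(LINT y:B|M2. (\<integral>x. F (x, y) \<partial>M1)) = (\<integral>x. (LINT y:B|M2. F (x, y)) \<partial>M1)" .
qed

lemma haar_SO3_space:
  assumes "haar_SO3 \<mu>"
  shows "space \<mu> = SO3"
proof -
  have "sets \<mu> = sets (restrict_space borel SO3)"
    using assms by (simp add: haar_SO3_def)
  then show ?thesis
    by (simp add: sets_eq_imp_space_eq space_restrict_space)
qed

lemma haar_SO3_left_mult_measurable: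
  assumes "haar_SO3 \<mu>" "Q \<in> SO3"
  shows "(\<lambda>R. Q ** R) \<in> measurable \<mu> \<mu>"
proof -
  have "(\<lambda>R. Q ** R) \<in> borel_measurable borel"
    unfolding matrix_matrix_mult_def by (intro borel_measurable_continuous_onI continuous_intros)
  then have "(\<lambda>R. Q ** R) \<in> measurable (restrict_space borel SO3) (restrict_space borel SO3)"
    by (rule measurable_restrict_space3) (simp add: assms(2) SO3_mult)
  moreover have "sets \<mu> = sets (restrict_space borel SO3)"
    using assms(1) by (simp add: haar_SO3_def)
  ultimately show ?thesis
    using measurable_cong_sets by blast
qed

lemma haar_SO3_integral_left_mult:
  fixes h :: "real^3^3 \<Rightarrow> real"
  assumes haar: "haar_SO3 \<mu>" and Q: "Q \<in> SO3" and h: "h \<in> borel_measurable \<mu>"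
  shows "(\<integral>R. h (Q ** R) \<partial>\<mu>) = integral\<^sup>L \<mu> h"
proof -
  have "(\<integral>R. h (Q ** R) \<partial>\<mu>) = integral\<^sup>L (distr \<mu> \<mu> (\<lambda>R. Q ** R)) h"
    by (rule integral_distr[OF haar_SO3_left_mult_measurable[OF haar Q] h, symmetric])
  also have "\<dots> = integral\<^sup>L \<mu> h"
    using haar Q by (simp add: haar_SO3_def)
  finally show ?thesis .
qed

theorem theorem3:
  fixes \<mu> :: "(real^3^3) measure"
    and \<psi> f :: "(real^3) \<times> real \<Rightarrow> real"
    and Q :: "real^3^3" and p :: "(real^3) \<times> real"
  assumes haar: "haar_SO3 \<mu>"
    and Q: "Q \<in> SO3"
    and p: "p \<in> S2 \<times> Hset"
    and int_rhs: "set_integrable (\<mu> \<Otimes>\<^sub>M lborel) (SO3 \<times> {0..2*pi}) (conv_integrand \<psi> f p)"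
    and int_lhs: "set_integrable (\<mu> \<Otimes>\<^sub>M lborel) (SO3 \<times> {0..2*pi})
                    (conv_integrand \<psi> (Lrot Q f) (rot_act Q p))"
    and inv: "\<forall>R\<in>SO3. \<forall>\<theta>. adj \<psi> R = adj \<psi> (R ** Zrot \<theta>)"
  shows "voxconv \<mu> \<psi> (Lrot Q f) (rot_act Q p) = voxconv \<mu> \<psi> f p"
proof -
  interpret prob_space \<mu>
    using haar by (simp add: haar_SO3_def)
  interpret pair_sigma_finite \<mu> lborel ..
  note space = haar_SO3_space[OF haar]
  note lhs = set_integrable_space_Times[OF int_lhs[folded space]]
  note rhs = set_integrable_space_Times[OF int_rhs[folded space]]
  let ?J\<^sub>L = "\<lambda>R. LINT \<gamma>:{0..2*pi}|lborel. conv_integrand \<psi> (Lrot Q f) (rot_act Q p) (R, \<gamma>)"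
  let ?J = "\<lambda>R. LINT \<gamma>:{0..2*pi}|lborel. conv_integrand \<psi> f p (R, \<gamma>)"
  have "voxconv \<mu> \<psi> (Lrot Q f) (rot_act Q p) = (\<integral>R. ?J\<^sub>L R \<partial>\<mu>)"
    using lhs(4) by (simp add: voxconv_def)
  also have "\<dots> = (\<integral>R. ?J\<^sub>L (Q ** R) \<partial>\<mu>)"
    using haar_SO3_integral_left_mult[OF haar Q lhs(1)] ..
  also have "\<dots> = (\<integral>R. ?J R \<partial>\<mu>)"
  proof (rule integral_cong_AE)
    show "(\<lambda>R. ?J\<^sub>L (Q ** R)) \<in> borel_measurable \<mu>"
      using measurable_comp[OF haar_SO3_left_mult_measurable[OF haar Q] lhs(1)] by (simp add: comp_def)
    show "AE R in \<mu>. ?J\<^sub>L (Q ** R) = ?J R"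
      using rhs(3) AE_space
    proof eventually_elim
      case (elim R)
      then have "R \<in> SO3"
        by (simp add: space)
      with elim show ?case
        using set_integral_conv_integrand_rot_act[OF inv Q _ p] lhs(2) Q by (simp add: space SO3_mult)
    qed
  qed (rule rhs(1))
  also have "\<dots> = voxconv \<mu> \<psi> f p"
    using rhs(4) by (simp add: voxconv_def)
  finally show ?thesis .
qed

end
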